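(* Let $(S,K,I)$ be a split graph, and let $u\in I$ and $z\in K$ be such that $uxz$ is a path in $A_4(S)$ for some $x\in K$. Then $u$ and $z$ are joined by a path $P$ in $A_4(S)$ with $V(P)\setminus\{z\}\subseteq I$ and $|V(P)|\le 4$.
   Context: All graphs are finite and simple. A split graph is a graph $S$ whose vertex set is a disjoint union $V(S)=K\,\dot\cup\,I$ with $K$ a clique and $I$ an independent set; $(K,I)$ is called a bipartition of $S$, and $(S,K,I)$ denotes $S$ together with this fixed bipartition. A 2-switch in a graph $G$ is performed on four distinct vertices $a,b,c,d$ with $ab,cd\in E(G)$ and $ac,bd\notin E(G)$: it deletes $ab,cd$ and adds $ac,bd$; $a,b,c,d$ are said to participate in it. $A_4(G)$ is the graph with vertex set $V(G)$ in which distinct $u,v$ are adjacent iff some 2-switch on $G$ has both $u$ and $v$ among its participating vertices. *)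

theory Defs
  imports Main
begin

definition simple_graph :: "'a set \<Rightarrow> ('a \<Rightarrow> 'a \<Rightarrow> bool) \<Rightarrow> bool" where
  "simple_graph V E \<longleftrightarrow> finite V \<and> (\<forall>u v. E u v \<longrightarrow> u \<in> V \<and> v \<in> V)
     \<and> (\<forall>u v. E u v \<longrightarrow> E v u) \<and> (\<forall>v. \<not> E v v)"

definition split_graph :: "'a set \<Rightarrow> ('a \<Rightarrow> 'a \<Rightarrow> bool) \<Rightarrow> 'a set \<Rightarrow> 'a set \<Rightarrow> bool" where
  "split_graph V E K I \<longleftrightarrow> simple_graph V E \<and> V = K \<union> I \<and> K \<inter> I = {}
     \<and> (\<forall>u\<in>K. \<forall>v\<in>K. u \<noteq> v \<longrightarrow> E u v)
     \<and> (\<forall>u\<in>I. \<forall>v\<in>I. \<not> E u v)"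

definition two_switch :: "'a set \<Rightarrow> ('a \<Rightarrow> 'a \<Rightarrow> bool) \<Rightarrow> 'a \<Rightarrow> 'a \<Rightarrow> 'a \<Rightarrow> 'a \<Rightarrow> bool" where
  "two_switch V E a b c d \<longleftrightarrow> a \<in> V \<and> b \<in> V \<and> c \<in> V \<and> d \<in> V
     \<and> distinct [a, b, c, d] \<and> E a b \<and> E c d \<and> \<not> E a c \<and> \<not> E b d"

definition A4 :: "'a set \<Rightarrow> ('a \<Rightarrow> 'a \<Rightarrow> bool) \<Rightarrow> 'a \<Rightarrow> 'a \<Rightarrow> bool" where
  "A4 V E u v \<longleftrightarrow> u \<noteq> v \<and>
     (\<exists>a b c d. two_switch V E a b c d \<and> u \<in> {a, b, c, d} \<and> v \<in> {a, b, c, d})"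

definition is_path :: "('a \<Rightarrow> 'a \<Rightarrow> bool) \<Rightarrow> 'a list \<Rightarrow> bool" where
  "is_path R ps \<longleftrightarrow> ps \<noteq> [] \<and> distinct ps \<and> (\<forall>i. Suc i < length ps \<longrightarrow> R (ps ! i) (ps ! Suc i))"

end

theory Submission
  imports Defs
begin

text \<open>In a split graph every 2-switch consists of two clique vertices \<open>k, k'\<close> and two
independent vertices \<open>i, i'\<close> such that the edges between \<open>{k, k'}\<close> and \<open>{i, i'}\<close> form a
perfect matching (\<open>alternating E k k' i i'\<close>); two vertices are adjacent in \<open>A\<^sub>4\<close> iff they
lie in such a quadruple. Take the quadruple \<open>{x, z, i\<^sub>1, i\<^sub>2}\<close> witnessing \<open>xz\<close>. If \<open>x\<close> and \<open>z\<close>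
differ on \<open>u\<close>, then \<open>u\<close> can replace one of \<open>i\<^sub>1, i\<^sub>2\<close>, so \<open>uz\<close> is an edge of \<open>A\<^sub>4\<close>. Otherwise
take the quadruple \<open>{x, k, u, w}\<close> witnessing \<open>ux\<close>: if \<open>x\<close> and \<open>z\<close> also agree on \<open>w\<close>, then \<open>z\<close>
can replace \<open>x\<close>; if not, \<open>wz\<close> is an edge of \<open>A\<^sub>4\<close> by the first case, and \<open>uwz\<close> is the
required path.\<close>

lemma is_path_singleton [simp]: "is_path R [a]"
  by (simp add: is_path_def)

lemma is_path_Cons_Cons [simp]:
  "is_path R (a # b # ps) \<longleftrightarrow> R a b \<and> a \<notin> set (b # ps) \<and> is_path R (b # ps)"
  by (auto simp: is_path_def nth_Cons less_Suc_eq_0_disj split: nat.splits)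

lemma A4_neq: "A4 V E u v \<Longrightarrow> u \<noteq> v"
  by (simp add: A4_def)

lemma split_graph_sym: "split_graph V E K I \<Longrightarrow> E u v \<Longrightarrow> E v u"
  by (simp add: split_graph_def simple_graph_def)

definition alternating :: "('a \<Rightarrow> 'a \<Rightarrow> bool) \<Rightarrow> 'a \<Rightarrow> 'a \<Rightarrow> 'a \<Rightarrow> 'a \<Rightarrow> bool" where
  "alternating E k k' i i' \<longleftrightarrow> E k i = E k' i' \<and> E k i' = E k' i \<and> E k i \<noteq> E k i'"

lemma alternating_commute: "alternating E k k' i i' \<Longrightarrow> alternating E k' k i i'"
  by (auto simp: alternating_def)

lemma alternating_swap: "alternating E k k' i i' \<Longrightarrow> alternating E k k' i' i"
  by (auto simp: alternating_def)

lemma alternating_replace: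
  "alternating E x k i i' \<Longrightarrow> E z i = E x i \<Longrightarrow> E z i' = E x i' \<Longrightarrow> alternating E z k i i'"
  unfolding alternating_def by argo

lemma two_switch_if_alternating:
  assumes sg: "split_graph V E K I" and "k \<in> K" "k' \<in> K" "i \<in> I" "i' \<in> I"
    and alt: "alternating E k k' i i'" and "E k i"
  shows "two_switch V E k i i' k'"
proof -
  have "K \<inter> I = {}" "V = K \<union> I" using sg by (auto simp: split_graph_def)
  moreover have "E i' k'" "\<not> E k i'" "\<not> E i k'"
    using alt \<open>E k i\<close> split_graph_sym[OF sg] unfolding alternating_def by blast+
  moreover have "k \<noteq> k'" "i \<noteq> i'"
    using alt unfolding alternating_def by auto
  ultimately show ?thesis
    using assms unfolding two_switch_def by auto
qed

lemma A4_if_alternating: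
  assumes sg: "split_graph V E K I" and "k \<in> K" "k' \<in> K" "i \<in> I" "i' \<in> I"
    and alt: "alternating E k k' i i'"
    and "p \<in> {k, k', i, i'}" "q \<in> {k, k', i, i'}" "p \<noteq> q"
  shows "A4 V E p q"
proof -
  have "two_switch V E k i i' k' \<or> two_switch V E k i' i k'"
  proof (cases "E k i")
    case True
    then show ?thesis using two_switch_if_alternating[OF assms(1-6)] by blast
  next
    case False
    with alt have "E k i'" unfolding alternating_def by auto
    then show ?thesis
      using two_switch_if_alternating[OF assms(1-3,5,4) alternating_swap[OF alt]] by blast
  qed
  then show ?thesis
    using assms unfolding A4_def by blast
qed

lemma alternating_if_two_switch:
  assumes sg: "split_graph V E K I" and sw: "two_switch V E a b c d"
  shows "a \<in> K \<and> d \<in> K \<and> b \<in> I \<and> c \<in> I \<and> alternating E a d b c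
    \<or> b \<in> K \<and> c \<in> K \<and> a \<in> I \<and> d \<in> I \<and> alternating E b c a d"
proof -
  have "V = K \<union> I" "K \<inter> I = {}"
    and "\<And>v w. v \<in> K \<Longrightarrow> w \<in> K \<Longrightarrow> v \<noteq> w \<Longrightarrow> E v w"
    and "\<And>v w. v \<in> I \<Longrightarrow> w \<in> I \<Longrightarrow> \<not> E v w"
    using sg unfolding split_graph_def by blast+
  moreover have "a \<in> V" "b \<in> V" "c \<in> V" "d \<in> V" "a \<noteq> c" "b \<noteq> d"
    "E a b" "E c d" "\<not> E a c" "\<not> E b d"
    using sw unfolding two_switch_def by auto
  ultimately have "a \<in> K \<and> d \<in> K \<and> b \<in> I \<and> c \<in> I \<or> b \<in> K \<and> c \<in> K \<and> a \<in> I \<and> d \<in> I"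
    by blast
  moreover have "alternating E a d b c" "alternating E b c a d"
    using sw split_graph_sym[OF sg] unfolding two_switch_def alternating_def by blast+
  ultimately show ?thesis by blast
qed

lemma alternating_if_A4:
  assumes sg: "split_graph V E K I" and "A4 V E p q"
  obtains k k' i i' where "k \<in> K" "k' \<in> K" "i \<in> I" "i' \<in> I" "alternating E k k' i i'"
    "p \<in> {k, k', i, i'}" "q \<in> {k, k', i, i'}"
proof -
  obtain a b c d where "two_switch V E a b c d" "p \<in> {a, b, c, d}" "q \<in> {a, b, c, d}"
    using \<open>A4 V E p q\<close> unfolding A4_def by blast
  with alternating_if_two_switch[OF sg] that show thesis by blast
qed

lemma alternating_if_A4_clique:
  assumes sg: "split_graph V E K I" and "A4 V E x z" "x \<in> K" "z \<in> K"
  obtains i i' where "i \<in> I" "i' \<in> I" "alternating E x z i i'"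
proof -
  have disj: "K \<inter> I = {}" using sg by (simp add: split_graph_def)
  obtain k k' i i' where q: "k \<in> K" "k' \<in> K" "i \<in> I" "i' \<in> I" "alternating E k k' i i'"
    "x \<in> {k, k', i, i'}" "z \<in> {k, k', i, i'}"
    using alternating_if_A4[OF sg \<open>A4 V E x z\<close>] .
  have "x = k \<and> z = k' \<or> x = k' \<and> z = k"
    using q disj A4_neq[OF \<open>A4 V E x z\<close>] \<open>x \<in> K\<close> \<open>z \<in> K\<close> by auto
  with q that alternating_commute[OF q(5)] show thesis by blast
qed

lemma alternating_if_A4_indep_clique:
  assumes sg: "split_graph V E K I" and "A4 V E u x" "u \<in> I" "x \<in> K"
  obtains k w where "k \<in> K" "w \<in> I" "alternating E x k u w"
proof -
  have disj: "K \<inter> I = {}" using sg by (simp add: split_graph_def)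
  obtain k k' i i' where q: "k \<in> K" "k' \<in> K" "i \<in> I" "i' \<in> I" "alternating E k k' i i'"
    "u \<in> {k, k', i, i'}" "x \<in> {k, k', i, i'}"
    using alternating_if_A4[OF sg \<open>A4 V E u x\<close>] .
  have "(x = k \<or> x = k') \<and> (u = i \<or> u = i')"
    using q disj \<open>u \<in> I\<close> \<open>x \<in> K\<close> by auto
  moreover have "alternating E k k' i' i" "alternating E k' k i i'" "alternating E k' k i' i"
    using q(5) by (auto simp: alternating_def)
  ultimately show thesis using q(1-5) that by blast
qed

lemma A4_if_neighbourhoods_differ:
  assumes sg: "split_graph V E K I" and "x \<in> K" "z \<in> K" "i \<in> I" "i' \<in> I" "v \<in> I"
    and alt: "alternating E x z i i'" and differ: "E x v \<noteq> E z v"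
  shows "A4 V E v z"
proof -
  have "v \<noteq> z" using sg \<open>v \<in> I\<close> \<open>z \<in> K\<close> by (auto simp: split_graph_def)
  have "alternating E x z v i' \<or> alternating E x z i v"
    using alt differ unfolding alternating_def by argo
  then show ?thesis
  proof
    assume "alternating E x z v i'"
    from A4_if_alternating[OF sg \<open>x \<in> K\<close> \<open>z \<in> K\<close> \<open>v \<in> I\<close> \<open>i' \<in> I\<close> this] \<open>v \<noteq> z\<close>
    show ?thesis by simp
  next
    assume "alternating E x z i v"
    from A4_if_alternating[OF sg \<open>x \<in> K\<close> \<open>z \<in> K\<close> \<open>i \<in> I\<close> \<open>v \<in> I\<close> this] \<open>v \<noteq> z\<close>
    show ?thesis by simp
  qed
qed

theorem lemma2p3:
  fixes V K I :: "'a set" and E :: "'a \<Rightarrow> 'a \<Rightarrow> bool" and u x z :: 'a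
  assumes "split_graph V E K I"
    and "u \<in> I" and "z \<in> K" and "x \<in> K"
    and "is_path (A4 V E) [u, x, z]"
  shows "\<exists>P. is_path (A4 V E) P \<and> hd P = u \<and> last P = z
           \<and> set P - {z} \<subseteq> I \<and> length P \<le> 4"
proof -
  note sg = assms(1)
  have ux: "A4 V E u x" and xz: "A4 V E x z" using assms(5) by simp_all
  obtain i i' where i: "i \<in> I" "i' \<in> I" and xzii: "alternating E x z i i'"
    using alternating_if_A4_clique[OF sg xz \<open>x \<in> K\<close> \<open>z \<in> K\<close>] .
  obtain k w where "k \<in> K" "w \<in> I" and xkuw: "alternating E x k u w"
    using alternating_if_A4_indep_clique[OF sg ux \<open>u \<in> I\<close> \<open>x \<in> K\<close>] .
  note differ = A4_if_neighbourhoods_differ[OF sg \<open>x \<in> K\<close> \<open>z \<in> K\<close> i _ xzii]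
  have "u \<noteq> z" using sg \<open>u \<in> I\<close> \<open>z \<in> K\<close> by (auto simp: split_graph_def)
  have direct: ?thesis if "A4 V E u z"
    using that \<open>u \<in> I\<close> \<open>u \<noteq> z\<close> by (intro exI[of _ "[u, z]"]) auto
  consider "E x u \<noteq> E z u" | "E x u = E z u" "E x w = E z w" | "E x w \<noteq> E z w" by blast
  then show ?thesis
  proof cases
    case 1
    then show ?thesis using differ[OF \<open>u \<in> I\<close>] direct by blast
  next
    case 2
    have "alternating E z k u w"
      using alternating_replace[OF xkuw 2[symmetric]] .
    from A4_if_alternating[OF sg \<open>z \<in> K\<close> \<open>k \<in> K\<close> \<open>u \<in> I\<close> \<open>w \<in> I\<close> this] \<open>u \<noteq> z\<close>
    show ?thesis using direct by simp
  next
    case 3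
    have wz: "A4 V E w z" using differ[OF \<open>w \<in> I\<close> 3] .
    have "u \<noteq> w" using xkuw by (auto simp: alternating_def)
    then have uw: "A4 V E u w"
      using A4_if_alternating[OF sg \<open>x \<in> K\<close> \<open>k \<in> K\<close> \<open>u \<in> I\<close> \<open>w \<in> I\<close> xkuw, of u w]
      by simp
    show ?thesis
      using uw wz A4_neq[OF uw] A4_neq[OF wz] \<open>u \<noteq> z\<close> \<open>u \<in> I\<close> \<open>w \<in> I\<close>
      by (intro exI[of _ "[u, w, z]"]) auto
  qed
qed

end
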